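(* Let $\mathcal{F}$ be a fusion ring with structure constants $(N_{i,j}^k)$, index $1$ being the unit. Suppose there is an index $k_0$ such that $N_{i,j}^{k_0}\neq0$ for all indices $i,j\neq1$. Then $\mathcal{F}$ passes the zero spectrum criterion, i.e. there are no indices $i_1,\dots,i_9$ satisfying all of the following: (1) $N_{i_4,i_1}^{i_6},\ N_{i_5,i_4}^{i_2},\ N_{i_5,i_6}^{i_3},\ N_{i_7,i_9}^{i_1},\ N_{i_2,i_7}^{i_8},\ N_{i_8,i_9}^{i_3}\neq0$; (2) $\sum_kN_{i_4,i_7}^kN_{i_5^*,i_8}^kN_{i_6,i_9^*}^k=0$; (3) $N_{i_2,i_1}^{i_3}=1$; (4) $\sum_kN_{i_5,i_4}^kN_{i_3,i_1^*}^k=1$ or $\sum_kN_{i_2,i_4^*}^kN_{i_3,i_6^*}^k=1$ or $\sum_kN_{i_5^*,i_2}^kN_{i_6,i_1^*}^k=1$; (5) $\sum_kN_{i_2,i_7}^kN_{i_3,i_9^*}^k=1$ or $\sum_kN_{i_8,i_7^*}^kN_{i_3,i_1^*}^k=1$ or $\sum_kN_{i_2^*,i_8}^kN_{i_1,i_9^*}^k=1$.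
   Context: A fusion ring is a ring which is a free $\mathbb{Z}$-module with finite basis $\{b_1,\dots,b_r\}$, $b_ib_j=\sum_kN_{i,j}^kb_k$, $N_{i,j}^k\in\mathbb{Z}_{\ge0}$, associative, unit $b_1$, duality $i\mapsto i^*$ with $N_{i,k}^1=N_{k,i}^1=\delta_{i^*,k}$, and Frobenius reciprocity $N_{i,j}^k=N_{i^*,k}^j=N_{k,j^*}^i$. (If indices as in (1)–(5) exist, the fusion ring admits no categorification over any field; "passing the zero spectrum criterion" means no such indices exist.) *)

theory Defs
  imports Main
begin

text \<open>A fusion ring of rank r: basis indexed by {0..<r}, index 0 is the unit b_1,
  N i j k is the structure constant N_{i,j}^k, d is the duality i -> i*.\<close>

definition fusion_ring :: "nat \<Rightarrow> (nat \<Rightarrow> nat \<Rightarrow> nat \<Rightarrow> nat) \<Rightarrow> (nat \<Rightarrow> nat) \<Rightarrow> bool" where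
  "fusion_ring r N d \<longleftrightarrow>
     0 < r \<and>
     (\<forall>i<r. d i < r) \<and>
     (\<forall>i<r. \<forall>j<r. \<forall>k<r. \<forall>l<r.
        (\<Sum>m<r. N i j m * N m k l) = (\<Sum>m<r. N j k m * N i m l)) \<and>
     (\<forall>i<r. \<forall>k<r. N 0 i k = (if i = k then 1 else 0) \<and> N i 0 k = (if i = k then 1 else 0)) \<and>
     (\<forall>i<r. \<forall>k<r. N i k 0 = (if d i = k then 1 else 0) \<and> N k i 0 = (if d i = k then 1 else 0)) \<and>
     (\<forall>i<r. \<forall>j<r. \<forall>k<r. N i j k = N (d i) k j \<and> N i j k = N k (d j) i)"

definition zero_spectrum_obstruction ::
  "nat \<Rightarrow> (nat \<Rightarrow> nat \<Rightarrow> nat \<Rightarrow> nat) \<Rightarrow> (nat \<Rightarrow> nat) \<Rightarrow>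
   nat \<Rightarrow> nat \<Rightarrow> nat \<Rightarrow> nat \<Rightarrow> nat \<Rightarrow> nat \<Rightarrow> nat \<Rightarrow> nat \<Rightarrow> nat \<Rightarrow> bool" where
  "zero_spectrum_obstruction r N d i1 i2 i3 i4 i5 i6 i7 i8 i9 \<longleftrightarrow>
     (N i4 i1 i6 \<noteq> 0 \<and> N i5 i4 i2 \<noteq> 0 \<and> N i5 i6 i3 \<noteq> 0 \<and>
      N i7 i9 i1 \<noteq> 0 \<and> N i2 i7 i8 \<noteq> 0 \<and> N i8 i9 i3 \<noteq> 0) \<and>
     (\<Sum>k<r. N i4 i7 k * N (d i5) i8 k * N i6 (d i9) k) = 0 \<and>
     N i2 i1 i3 = 1 \<and>
     ((\<Sum>k<r. N i5 i4 k * N i3 (d i1) k) = 1 \<or>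
      (\<Sum>k<r. N i2 (d i4) k * N i3 (d i6) k) = 1 \<or>
      (\<Sum>k<r. N (d i5) i2 k * N i6 (d i1) k) = 1) \<and>
     ((\<Sum>k<r. N i2 i7 k * N i3 (d i9) k) = 1 \<or>
      (\<Sum>k<r. N i8 (d i7) k * N i3 (d i1) k) = 1 \<or>
      (\<Sum>k<r. N (d i2) i8 k * N i1 (d i9) k) = 1)"

definition passes_zero_spectrum :: "nat \<Rightarrow> (nat \<Rightarrow> nat \<Rightarrow> nat \<Rightarrow> nat) \<Rightarrow> (nat \<Rightarrow> nat) \<Rightarrow> bool" where
  "passes_zero_spectrum r N d \<longleftrightarrow>
     \<not> (\<exists>i1<r. \<exists>i2<r. \<exists>i3<r. \<exists>i4<r. \<exists>i5<r. \<exists>i6<r. \<exists>i7<r. \<exists>i8<r. \<exists>i9<r.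
          zero_spectrum_obstruction r N d i1 i2 i3 i4 i5 i6 i7 i8 i9)"

end

theory Submission
  imports Defs
begin

text \<open>Only conditions (1) and (2) matter. Condition (2) says that the three products
  b_i4 b_i7, b_i5* b_i8 and b_i6 b_i9* have no common constituent. If none of the six factors is
  the unit, b_k0 is one. If one of them is the unit, that product is a single basis element, and
  condition (1) together with Frobenius reciprocity shows that it occurs in the other two products.\<close>

context
  fixes r :: nat and N :: "nat \<Rightarrow> nat \<Rightarrow> nat \<Rightarrow> nat" and d :: "nat \<Rightarrow> nat"
  assumes fusion: "fusion_ring r N d"
begin

lemma dual_less: "i < r \<Longrightarrow> d i < r"
  using fusion unfolding fusion_ring_def by meson

lemma unit_left: "i < r \<Longrightarrow> k < r \<Longrightarrow> N 0 i k = (if i = k then 1 else 0)"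
  using fusion unfolding fusion_ring_def by meson

lemma unit_right: "i < r \<Longrightarrow> k < r \<Longrightarrow> N i 0 k = (if i = k then 1 else 0)"
  using fusion unfolding fusion_ring_def by meson

lemma unit_coeff_right: "i < r \<Longrightarrow> k < r \<Longrightarrow> N i k 0 = (if d i = k then 1 else 0)"
  using fusion unfolding fusion_ring_def by meson

lemma unit_coeff_left: "i < r \<Longrightarrow> k < r \<Longrightarrow> N k i 0 = (if d i = k then 1 else 0)"
  using fusion unfolding fusion_ring_def by meson

lemma frobenius_left: "i < r \<Longrightarrow> j < r \<Longrightarrow> k < r \<Longrightarrow> N i j k = N (d i) k j"
  using fusion unfolding fusion_ring_def by meson

lemma frobenius_right: "i < r \<Longrightarrow> j < r \<Longrightarrow> k < r \<Longrightarrow> N i j k = N k (d j) i"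
  using fusion unfolding fusion_ring_def by meson

lemma frobenius_rotate: "i < r \<Longrightarrow> j < r \<Longrightarrow> k < r \<Longrightarrow> N i j k = N j (d k) (d i)"
  using frobenius_left[of i j k] frobenius_right[of "d i" k j] dual_less by simp

lemma unit_left_nonzero_iff: "i < r \<Longrightarrow> k < r \<Longrightarrow> N 0 i k \<noteq> 0 \<longleftrightarrow> k = i"
  by (auto simp: unit_left)

lemma unit_right_nonzero_iff: "i < r \<Longrightarrow> k < r \<Longrightarrow> N i 0 k \<noteq> 0 \<longleftrightarrow> k = i"
  by (auto simp: unit_right)

lemma unit_coeff_nonzero_iff: "i < r \<Longrightarrow> k < r \<Longrightarrow> N i k 0 \<noteq> 0 \<longleftrightarrow> k = d i"
  by (auto simp: unit_coeff_right)

lemma dual_dual: "i < r \<Longrightarrow> d (d i) = i"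
  using unit_coeff_left[of i "d i"] unit_coeff_nonzero_iff[of "d i" i] dual_less by simp

lemma dual_unit: "d 0 = 0"
proof -
  have "0 < r"
    using fusion unfolding fusion_ring_def by meson
  then show ?thesis
    using unit_left[of 0 0] unit_coeff_nonzero_iff[of 0 0] by simp
qed

lemma dual_eq_unit_iff: "i < r \<Longrightarrow> d i = 0 \<longleftrightarrow> i = 0"
  using dual_dual dual_unit by force

lemma unit_factor_common_constituent:
  assumes lt: "i1 < r" "i2 < r" "i3 < r" "i4 < r" "i5 < r" "i6 < r" "i7 < r" "i8 < r" "i9 < r"
    and nz: "N i4 i1 i6 \<noteq> 0" "N i5 i4 i2 \<noteq> 0" "N i5 i6 i3 \<noteq> 0"
      "N i7 i9 i1 \<noteq> 0" "N i2 i7 i8 \<noteq> 0" "N i8 i9 i3 \<noteq> 0"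
    and unit: "i4 = 0 \<or> i7 = 0 \<or> i5 = 0 \<or> i8 = 0 \<or> i6 = 0 \<or> i9 = 0"
  shows "\<exists>k<r. N i4 i7 k \<noteq> 0 \<and> N (d i5) i8 k \<noteq> 0 \<and> N i6 (d i9) k \<noteq> 0"
  using unit
proof (elim disjE)
  assume "i4 = 0"
  with nz lt have "i6 = i1" "i2 = i5"
    using unit_left_nonzero_iff unit_right_nonzero_iff by auto
  with \<open>i4 = 0\<close> nz lt have "N i4 i7 i7 \<noteq> 0" "N (d i5) i8 i7 \<noteq> 0" "N i6 (d i9) i7 \<noteq> 0"
    using unit_left_nonzero_iff frobenius_left[of i5 i7 i8] frobenius_right[of i7 i9 i1] by auto
  with lt show ?thesis by blast
next
  assume "i7 = 0"
  with nz lt have "i1 = i9" "i8 = i2"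
    using unit_left_nonzero_iff unit_right_nonzero_iff by auto
  with \<open>i7 = 0\<close> nz lt have "N i4 i7 i4 \<noteq> 0" "N (d i5) i8 i4 \<noteq> 0" "N i6 (d i9) i4 \<noteq> 0"
    using unit_right_nonzero_iff frobenius_left[of i5 i4 i2] frobenius_right[of i4 i1 i6] by auto
  with lt show ?thesis by blast
next
  assume "i5 = 0"
  with nz lt have "i2 = i4" "i3 = i6"
    using unit_left_nonzero_iff by auto
  with \<open>i5 = 0\<close> nz lt have "N i4 i7 i8 \<noteq> 0" "N (d i5) i8 i8 \<noteq> 0" "N i6 (d i9) i8 \<noteq> 0"
    using unit_left_nonzero_iff dual_unit frobenius_right[of i8 i9 i3] by auto
  with lt show ?thesis by blast
next
  assume "i8 = 0"
  with nz lt have "i7 = d i2" "i3 = i9"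
    using unit_left_nonzero_iff unit_coeff_nonzero_iff by auto
  with \<open>i8 = 0\<close> nz lt
  have "N i4 i7 (d i5) \<noteq> 0" "N (d i5) i8 (d i5) \<noteq> 0" "N i6 (d i9) (d i5) \<noteq> 0"
    using unit_right_nonzero_iff dual_less frobenius_rotate[of i5 i4 i2] frobenius_rotate[of i5 i6 i3]
    by auto
  with lt dual_less show ?thesis by blast
next
  assume "i6 = 0"
  with nz lt have "i1 = d i4" "i3 = i5"
    using unit_right_nonzero_iff unit_coeff_nonzero_iff by auto
  with \<open>i6 = 0\<close> nz lt
  have "N i4 i7 (d i9) \<noteq> 0" "N (d i5) i8 (d i9) \<noteq> 0" "N i6 (d i9) (d i9) \<noteq> 0"
    using unit_left_nonzero_iff dual_less dual_dual
      frobenius_rotate[of i4 i7 "d i9"] frobenius_rotate[of "d i5" i8 "d i9"]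
    by auto
  with lt dual_less show ?thesis by blast
next
  assume "i9 = 0"
  with nz lt have "i1 = i7" "i3 = i8"
    using unit_right_nonzero_iff by auto
  with \<open>i9 = 0\<close> nz lt have "N i4 i7 i6 \<noteq> 0" "N (d i5) i8 i6 \<noteq> 0" "N i6 (d i9) i6 \<noteq> 0"
    using unit_right_nonzero_iff dual_unit frobenius_left[of i5 i6 i3] by auto
  with lt show ?thesis by blast
qed

lemma obstruction_common_constituent:
  assumes k0: "k0 < r" "\<And>i j. i < r \<Longrightarrow> j < r \<Longrightarrow> i \<noteq> 0 \<Longrightarrow> j \<noteq> 0 \<Longrightarrow> N i j k0 \<noteq> 0"
    and lt: "i1 < r" "i2 < r" "i3 < r" "i4 < r" "i5 < r" "i6 < r" "i7 < r" "i8 < r" "i9 < r"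
    and nz: "N i4 i1 i6 \<noteq> 0" "N i5 i4 i2 \<noteq> 0" "N i5 i6 i3 \<noteq> 0"
      "N i7 i9 i1 \<noteq> 0" "N i2 i7 i8 \<noteq> 0" "N i8 i9 i3 \<noteq> 0"
  shows "\<exists>k<r. N i4 i7 k \<noteq> 0 \<and> N (d i5) i8 k \<noteq> 0 \<and> N i6 (d i9) k \<noteq> 0"
proof (cases "i4 = 0 \<or> i7 = 0 \<or> i5 = 0 \<or> i8 = 0 \<or> i6 = 0 \<or> i9 = 0")
  case True
  then show ?thesis
    by (rule unit_factor_common_constituent[OF lt nz])
next
  case False
  then have "d i5 \<noteq> 0" "d i9 \<noteq> 0"
    using dual_eq_unit_iff lt by simp_all
  with False lt have "N i4 i7 k0 \<noteq> 0" "N (d i5) i8 k0 \<noteq> 0" "N i6 (d i9) k0 \<noteq> 0"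
    using dual_less by (simp_all add: k0(2))
  with k0(1) show ?thesis
    by blast
qed

end

theorem lemma7p15:
  fixes r :: nat and N :: "nat \<Rightarrow> nat \<Rightarrow> nat \<Rightarrow> nat" and d :: "nat \<Rightarrow> nat" and k0 :: nat
  assumes "fusion_ring r N d"
    and "k0 < r"
    and "\<And>i j. i < r \<Longrightarrow> j < r \<Longrightarrow> i \<noteq> 0 \<Longrightarrow> j \<noteq> 0 \<Longrightarrow> N i j k0 \<noteq> 0"
  shows "passes_zero_spectrum r N d"
proof -
  have "\<not> zero_spectrum_obstruction r N d i1 i2 i3 i4 i5 i6 i7 i8 i9"
    if lt: "i1 < r" "i2 < r" "i3 < r" "i4 < r" "i5 < r" "i6 < r" "i7 < r" "i8 < r" "i9 < r"
    for i1 i2 i3 i4 i5 i6 i7 i8 i9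
  proof
    assume "zero_spectrum_obstruction r N d i1 i2 i3 i4 i5 i6 i7 i8 i9"
    then have nz: "N i4 i1 i6 \<noteq> 0" "N i5 i4 i2 \<noteq> 0" "N i5 i6 i3 \<noteq> 0"
        "N i7 i9 i1 \<noteq> 0" "N i2 i7 i8 \<noteq> 0" "N i8 i9 i3 \<noteq> 0"
      and vanish: "(\<Sum>k<r. N i4 i7 k * N (d i5) i8 k * N i6 (d i9) k) = 0"
      unfolding zero_spectrum_obstruction_def by simp_all
    obtain k where "k < r" "N i4 i7 k \<noteq> 0" "N (d i5) i8 k \<noteq> 0" "N i6 (d i9) k \<noteq> 0"
      using obstruction_common_constituent[OF assms lt nz] by blast
    then have "0 < (\<Sum>k<r. N i4 i7 k * N (d i5) i8 k * N i6 (d i9) k)"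
      by (intro sum_pos2[where i = k]) auto
    then show False
      by (simp add: vanish)
  qed
  then show ?thesis
    unfolding passes_zero_spectrum_def by auto
qed

end
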